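(* Let $\theta\in\mathrm{Irr}(N)$. Then $K_{\tilde\theta}=\mathrm{Stab}_G(\theta)$ is a normal subgroup of $L_{\tilde\theta}=\mathrm{Stab}_G(\tilde\theta)$.
   Context: $G$ is a profinite group and $N$ is an open normal subgroup of $G$. $\mathrm{Irr}(H)$ denotes the continuous irreducible complex characters of $H$ and $\mathrm{Lin}(H)$ the continuous degree-one characters. For $H\le G$, $\lambda,\delta\in\mathrm{Irr}(H)$ are $G$-twist equivalent if $\lambda=\delta\,\psi|_H$ for some $\psi\in\mathrm{Lin}(G)$; $\tilde\theta$ denotes the $G$-twist class of $\theta$. $G$ acts on $\mathrm{Irr}(N)$ by ${}^g\theta(n)=\theta(g^{-1}ng)$, and this induces an action $g\cdot\tilde\theta=\widetilde{{}^g\theta}$ on $G$-twist classes of $\mathrm{Irr}(N)$. $K_{\tilde\theta}=\mathrm{Stab}_G(\theta)$ (which depends only on $\tilde\theta$) and $L_{\tilde\theta}=\mathrm{Stab}_G(\tilde\theta)$. *)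

theory Defs
  imports "HOL-Algebra.Coset" "HOL-Analysis.Analysis" "Jordan_Normal_Form.Matrix"
begin

definition topological_group :: "('a, 'b) monoid_scheme \<Rightarrow> 'a topology \<Rightarrow> bool" where
  "topological_group G T \<longleftrightarrow> group G \<and> topspace T = carrier G
     \<and> continuous_map (prod_topology T T) T (\<lambda>(x, y). x \<otimes>\<^bsub>G\<^esub> y)
     \<and> continuous_map T T (\<lambda>x. inv\<^bsub>G\<^esub> x)"

definition profinite_group :: "('a, 'b) monoid_scheme \<Rightarrow> 'a topology \<Rightarrow> bool" where
  "profinite_group G T \<longleftrightarrow> topological_group G T \<and> compact_space T \<and> Hausdorff_space T
     \<and> (\<forall>x y. connected_component_of T x y \<longrightarrow> x = y)"

definition mat_trace :: "complex mat \<Rightarrow> complex" where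
  "mat_trace A = (\<Sum>i<dim_row A. A $$ (i, i))"

definition cont_rep ::
  "('a, 'b) monoid_scheme \<Rightarrow> 'a topology \<Rightarrow> 'a set \<Rightarrow> nat \<Rightarrow> ('a \<Rightarrow> complex mat) \<Rightarrow> bool" where
  "cont_rep G T H n \<rho> \<longleftrightarrow>
     (\<forall>x\<in>H. \<rho> x \<in> carrier_mat n n)
     \<and> \<rho> \<one>\<^bsub>G\<^esub> = 1\<^sub>m n
     \<and> (\<forall>x\<in>H. \<forall>y\<in>H. \<rho> (x \<otimes>\<^bsub>G\<^esub> y) = \<rho> x * \<rho> y)
     \<and> (\<forall>i<n. \<forall>j<n. continuous_map (subtopology T H) euclidean (\<lambda>x. \<rho> x $$ (i, j)))"

definition is_subspace :: "nat \<Rightarrow> complex vec set \<Rightarrow> bool" where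
  "is_subspace n W \<longleftrightarrow> W \<subseteq> carrier_vec n \<and> 0\<^sub>v n \<in> W
     \<and> (\<forall>v\<in>W. \<forall>w\<in>W. v + w \<in> W) \<and> (\<forall>c. \<forall>v\<in>W. c \<cdot>\<^sub>v v \<in> W)"

definition irreducible_rep :: "'a set \<Rightarrow> nat \<Rightarrow> ('a \<Rightarrow> complex mat) \<Rightarrow> bool" where
  "irreducible_rep H n \<rho> \<longleftrightarrow> n > 0 \<and>
     (\<forall>W. is_subspace n W \<and> (\<forall>x\<in>H. \<forall>w\<in>W. \<rho> x *\<^sub>v w \<in> W)
          \<longrightarrow> W = {0\<^sub>v n} \<or> W = carrier_vec n)"

definition Irr :: "('a, 'b) monoid_scheme \<Rightarrow> 'a topology \<Rightarrow> 'a set \<Rightarrow> ('a \<Rightarrow> complex) set" where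
  "Irr G T H = {chi. \<exists>n \<rho>. cont_rep G T H n \<rho> \<and> irreducible_rep H n \<rho>
       \<and> chi = (\<lambda>x. if x \<in> H then mat_trace (\<rho> x) else 0)}"

definition Lin :: "('a, 'b) monoid_scheme \<Rightarrow> 'a topology \<Rightarrow> ('a \<Rightarrow> complex) set" where
  "Lin G T = {\<psi>. continuous_map T euclidean \<psi>
       \<and> (\<forall>x\<in>carrier G. \<psi> x \<noteq> 0)
       \<and> (\<forall>x\<in>carrier G. \<forall>y\<in>carrier G. \<psi> (x \<otimes>\<^bsub>G\<^esub> y) = \<psi> x * \<psi> y)}"

text \<open>The G-twist class of \<theta> \<in> Irr(H): all \<theta> \<cdot> \<psi>|_H with \<psi> \<in> Lin(G)
  (\<theta> vanishes outside H, so the product is the restriction).\<close>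
definition twist_class :: "('a, 'b) monoid_scheme \<Rightarrow> 'a topology \<Rightarrow> ('a \<Rightarrow> complex) \<Rightarrow> ('a \<Rightarrow> complex) set" where
  "twist_class G T \<theta> = {lam. \<exists>\<psi>\<in>Lin G T. lam = (\<lambda>x. \<theta> x * \<psi> x)}"

definition conj_char :: "('a, 'b) monoid_scheme \<Rightarrow> 'a set \<Rightarrow> 'a \<Rightarrow> ('a \<Rightarrow> complex) \<Rightarrow> ('a \<Rightarrow> complex)" where
  "conj_char G N g \<theta> = (\<lambda>n. if n \<in> N then \<theta> (inv\<^bsub>G\<^esub> g \<otimes>\<^bsub>G\<^esub> n \<otimes>\<^bsub>G\<^esub> g) else 0)"

text \<open>K = Stab_G(\<theta>) and L = Stab_G(\<theta>~) for the induced action g\<cdot>\<theta>~ = (g\<theta>)~.\<close>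
definition stab_char :: "('a, 'b) monoid_scheme \<Rightarrow> 'a set \<Rightarrow> ('a \<Rightarrow> complex) \<Rightarrow> 'a set" where
  "stab_char G N \<theta> = {g \<in> carrier G. conj_char G N g \<theta> = \<theta>}"

definition stab_twist_class ::
  "('a, 'b) monoid_scheme \<Rightarrow> 'a topology \<Rightarrow> 'a set \<Rightarrow> ('a \<Rightarrow> complex) \<Rightarrow> 'a set" where
  "stab_twist_class G T N \<theta> =
     {g \<in> carrier G. twist_class G T (conj_char G N g \<theta>) = twist_class G T \<theta>}"

end

theory Submission
  imports Defs
begin

text \<open>Conjugation is an action of G on the functions vanishing outside N, and it commutes
  with twisting by Lin(G) because linear characters are class functions. Hence
  \<open>L\<^sub>\<theta>\<close> is the setwise stabilizer of the twist class of \<theta>, and, since an element fixing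
  \<theta> fixes every twist \<open>\<theta>\<psi>\<close>, \<open>K\<^sub>\<theta>\<close> is its pointwise stabilizer. The pointwise stabilizer
  of a set is always normal in its setwise stabilizer.\<close>

definition setwise_stabilizer :: "('a, 'b) monoid_scheme \<Rightarrow> ('a \<Rightarrow> 'x \<Rightarrow> 'x) \<Rightarrow> 'x set \<Rightarrow> 'a set" where
  "setwise_stabilizer G act S = {g \<in> carrier G. act g ` S = S}"

definition pointwise_stabilizer :: "('a, 'b) monoid_scheme \<Rightarrow> ('a \<Rightarrow> 'x \<Rightarrow> 'x) \<Rightarrow> 'x set \<Rightarrow> 'a set" where
  "pointwise_stabilizer G act S = {g \<in> carrier G. \<forall>x\<in>S. act g x = x}"

locale group_action_on = group G for G (structure) +
  fixes X :: "'x set" and act :: "'a \<Rightarrow> 'x \<Rightarrow> 'x"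
  assumes act_one: "x \<in> X \<Longrightarrow> act \<one> x = x"
    and act_mult: "\<lbrakk>g \<in> carrier G; h \<in> carrier G; x \<in> X\<rbrakk> \<Longrightarrow> act (g \<otimes> h) x = act g (act h x)"
begin

lemma image_act_mult:
  assumes "g \<in> carrier G" "h \<in> carrier G" "S \<subseteq> X"
  shows "act (g \<otimes> h) ` S = act g ` act h ` S"
  using assms act_mult by (force simp: image_image)

lemma image_act_one: "S \<subseteq> X \<Longrightarrow> act \<one> ` S = S"
  using act_one by (force simp: subset_iff)

lemma setwise_stabilizer_subgroup:
  assumes "S \<subseteq> X"
  shows "subgroup (setwise_stabilizer G act S) G"
proof
  fix g h assume "g \<in> setwise_stabilizer G act S" "h \<in> setwise_stabilizer G act S"
  then show "g \<otimes> h \<in> setwise_stabilizer G act S"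
    using image_act_mult[OF _ _ assms] by (simp add: setwise_stabilizer_def)
next
  fix g assume g: "g \<in> setwise_stabilizer G act S"
  then have "act (inv g) ` S = act (inv g) ` act g ` S"
    by (simp add: setwise_stabilizer_def)
  also have "\<dots> = S"
    using g image_act_mult[OF _ _ assms, of "inv g" g] image_act_one[OF assms]
    by (simp add: setwise_stabilizer_def)
  finally show "inv g \<in> setwise_stabilizer G act S"
    using g by (simp add: setwise_stabilizer_def)
qed (use image_act_one[OF assms] in \<open>auto simp: setwise_stabilizer_def\<close>)

lemma pointwise_stabilizer_subgroup:
  assumes "S \<subseteq> X"
  shows "subgroup (pointwise_stabilizer G act S) G"
proof
  fix g assume g: "g \<in> pointwise_stabilizer G act S"
  have "act (inv g) x = x" if "x \<in> S" for x
    using g that assms act_mult[of "inv g" g x] act_one[of x]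
    by (auto simp: pointwise_stabilizer_def)
  with g show "inv g \<in> pointwise_stabilizer G act S"
    by (simp add: pointwise_stabilizer_def)
qed (use assms act_one act_mult in \<open>auto simp: pointwise_stabilizer_def\<close>)

lemma pointwise_stabilizer_normal:
  assumes "S \<subseteq> X"
  shows "pointwise_stabilizer G act S \<lhd> G\<lparr>carrier := setwise_stabilizer G act S\<rparr>"
proof -
  let ?K = "pointwise_stabilizer G act S" and ?L = "setwise_stabilizer G act S"
  have L: "subgroup ?L G" and K: "subgroup ?K G"
    using assms by (rule setwise_stabilizer_subgroup, rule pointwise_stabilizer_subgroup)
  have "?K \<subseteq> ?L"
    by (auto simp: pointwise_stabilizer_def setwise_stabilizer_def)
  then have KL: "subgroup ?K (G\<lparr>carrier := ?L\<rparr>)"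
    by (rule subgroup_incl[OF K L])
  have conj_fixes: "act (l \<otimes> k \<otimes> inv l) x = x" if "l \<in> ?L" "k \<in> ?K" "x \<in> S" for l k x
  proof -
    have l: "l \<in> carrier G" and k: "k \<in> carrier G"
      using that by (auto simp: setwise_stabilizer_def pointwise_stabilizer_def)
    have y: "act (inv l) x \<in> S"
      using that(1,3) subgroup.m_inv_closed[OF L that(1)] by (force simp: setwise_stabilizer_def)
    have "act (l \<otimes> k \<otimes> inv l) x = act l (act k (act (inv l) x))"
      using l k that(3) y assms by (simp add: act_mult subsetD)
    also have "\<dots> = act l (act (inv l) x)"
      using y that(2) by (simp add: pointwise_stabilizer_def)
    also have "\<dots> = x"
      using l that(3) assms act_one act_mult[of l "inv l" x] by (auto simp: subsetD)
    finally show ?thesis .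
  qed
  show ?thesis
    unfolding group.normal_inv_iff[OF subgroup_imp_group[OF L]]
  proof (intro conjI KL ballI)
    fix l k assume l: "l \<in> carrier (G\<lparr>carrier := ?L\<rparr>)" and k: "k \<in> ?K"
    then have "l \<in> carrier G" "k \<in> carrier G"
      by (auto simp: setwise_stabilizer_def pointwise_stabilizer_def)
    then show "l \<otimes>\<^bsub>G\<lparr>carrier := ?L\<rparr>\<^esub> k \<otimes>\<^bsub>G\<lparr>carrier := ?L\<rparr>\<^esub> inv\<^bsub>G\<lparr>carrier := ?L\<rparr>\<^esub> l \<in> ?K"
      using l conj_fixes[of l k] k by (simp add: pointwise_stabilizer_def L)
  qed
qed

end

lemma conj_char_mult:
  fixes G (structure)
  assumes "N \<lhd> G" "g \<in> carrier G" "h \<in> carrier G"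
  shows "conj_char G N (g \<otimes> h) \<phi> = conj_char G N g (conj_char G N h \<phi>)"
proof
  interpret group G using assms(1) by (rule normal.axioms(2))
  fix n
  show "conj_char G N (g \<otimes> h) \<phi> n = conj_char G N g (conj_char G N h \<phi>) n"
  proof (cases "n \<in> N")
    case True
    then have "inv g \<otimes> n \<otimes> g \<in> N"
      using assms by (metis inv_closed inv_inv normal_inv_iff)
    moreover have "inv (g \<otimes> h) \<otimes> n \<otimes> (g \<otimes> h) = inv h \<otimes> (inv g \<otimes> n \<otimes> g) \<otimes> h"
      using assms True normal_imp_subgroup[OF assms(1)]
      by (simp add: inv_mult_group m_assoc subgroup.mem_carrier)
    ultimately show ?thesis
      using True by (simp add: conj_char_def)
  qed (simp add: conj_char_def)
qed

lemma conj_char_one: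
  assumes "group G" "N \<subseteq> carrier G" "\<forall>x. x \<notin> N \<longrightarrow> \<phi> x = 0"
  shows "conj_char G N \<one>\<^bsub>G\<^esub> \<phi> = \<phi>"
proof -
  interpret group G by fact
  show ?thesis
    using assms by (auto simp: conj_char_def subsetD)
qed

lemma conj_char_action:
  assumes "N \<lhd> G"
  shows "group_action_on G {\<phi>. \<forall>x. x \<notin> N \<longrightarrow> \<phi> x = 0} (conj_char G N)"
proof -
  have "group G" "N \<subseteq> carrier G"
    using assms normal_imp_subgroup subgroup.subset normal.axioms(2) by blast+
  then show ?thesis
    by (simp add: group_action_on_def group_action_on_axioms_def conj_char_one
        conj_char_mult[OF assms])
qed

lemma Lin_one:
  fixes G (structure)
  assumes "group G" "\<psi> \<in> Lin G T"
  shows "\<psi> \<one> = 1"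
proof -
  interpret group G by fact
  have "\<psi> (\<one> \<otimes> \<one>) = \<psi> \<one> * \<psi> \<one>"
    using assms(2) one_closed unfolding Lin_def by blast
  then have "\<psi> \<one> * \<psi> \<one> = \<psi> \<one> * 1"
    by simp
  moreover have "\<psi> \<one> \<noteq> 0"
    using assms(2) by (simp add: Lin_def)
  ultimately show ?thesis
    by simp
qed

lemma Lin_conj_invariant:
  fixes G (structure)
  assumes "group G" "\<psi> \<in> Lin G T" "g \<in> carrier G" "n \<in> carrier G"
  shows "\<psi> (inv g \<otimes> n \<otimes> g) = \<psi> n"
proof -
  interpret group G by fact
  have mult: "\<psi> (x \<otimes> y) = \<psi> x * \<psi> y" if "x \<in> carrier G" "y \<in> carrier G" for x y
    using assms(2) that by (simp add: Lin_def)
  have "\<psi> (inv g \<otimes> n \<otimes> g) = \<psi> n * (\<psi> (inv g) * \<psi> g)"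
    using assms by (simp add: mult)
  also have "\<psi> (inv g) * \<psi> g = \<psi> (inv g \<otimes> g)"
    using assms(3) by (simp only: mult inv_closed)
  also have "\<dots> = 1"
    using assms(3) Lin_one[OF assms(1,2)] by simp
  finally show ?thesis
    by simp
qed

lemma conj_char_twist:
  assumes "group G" "N \<subseteq> carrier G" "\<psi> \<in> Lin G T" "g \<in> carrier G"
  shows "conj_char G N g (\<lambda>x. \<phi> x * \<psi> x) = (\<lambda>x. conj_char G N g \<phi> x * \<psi> x)"
  using assms Lin_conj_invariant by (fastforce simp: conj_char_def)

lemma twist_class_conj_char:
  assumes "group G" "N \<subseteq> carrier G" "g \<in> carrier G"
  shows "twist_class G T (conj_char G N g \<phi>) = conj_char G N g ` twist_class G T \<phi>"
proof -
  have "twist_class G T (conj_char G N g \<phi>) = (\<lambda>\<psi> x. conj_char G N g \<phi> x * \<psi> x) ` Lin G T"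
    by (auto simp: twist_class_def)
  also have "\<dots> = (\<lambda>\<psi>. conj_char G N g (\<lambda>x. \<phi> x * \<psi> x)) ` Lin G T"
    using conj_char_twist[OF assms(1,2) _ assms(3)] by simp
  also have "\<dots> = conj_char G N g ` twist_class G T \<phi>"
    by (auto simp: twist_class_def)
  finally show ?thesis .
qed

lemma self_in_twist_class: "\<phi> \<in> twist_class G T \<phi>"
proof -
  have "(\<lambda>x. 1) \<in> Lin G T"
    by (simp add: Lin_def)
  then show ?thesis
    by (force simp: twist_class_def)
qed

lemma Irr_vanishes_outside: "\<theta> \<in> Irr G T N \<Longrightarrow> x \<notin> N \<Longrightarrow> \<theta> x = 0"
  by (auto simp: Irr_def)

lemma stab_twist_class_eq_setwise_stabilizer:
  assumes "group G" "N \<subseteq> carrier G"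
  shows "stab_twist_class G T N \<theta> = setwise_stabilizer G (conj_char G N) (twist_class G T \<theta>)"
  using assms by (auto simp: stab_twist_class_def setwise_stabilizer_def twist_class_conj_char)

lemma stab_char_eq_pointwise_stabilizer:
  assumes "group G" "N \<subseteq> carrier G"
  shows "stab_char G N \<theta> = pointwise_stabilizer G (conj_char G N) (twist_class G T \<theta>)"
  using assms self_in_twist_class[of \<theta> G T]
  by (auto simp: stab_char_def pointwise_stabilizer_def twist_class_def conj_char_twist)

theorem lemma2p3:
  fixes G :: "('a, 'b) monoid_scheme" and T :: "'a topology"
    and N :: "'a set" and \<theta> :: "'a \<Rightarrow> complex"
  assumes "profinite_group G T"
    and "N \<lhd> G" and "openin T N"
    and "\<theta> \<in> Irr G T N"
  shows "stab_char G N \<theta> \<lhd> G\<lparr>carrier := stab_twist_class G T N \<theta>\<rparr>"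
proof -
  let ?X = "{\<phi>. \<forall>x. x \<notin> N \<longrightarrow> \<phi> x = 0}"
  interpret group_action_on G ?X "conj_char G N"
    using assms(2) by (rule conj_char_action)
  have "N \<subseteq> carrier G"
    using assms(2) normal_imp_subgroup subgroup.subset by blast
  moreover have "twist_class G T \<theta> \<subseteq> ?X"
    using Irr_vanishes_outside[OF assms(4)] by (auto simp: twist_class_def)
  ultimately show ?thesis
    by (simp add: stab_char_eq_pointwise_stabilizer[where T = T] is_group
        stab_twist_class_eq_setwise_stabilizer pointwise_stabilizer_normal)
qed

end
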